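(* Let $A,B,C$ be a bipartite LR triple over $\mathbb F$ of diameter $d$. Then $d$ is even, and for $0\le i\le d$ each of $\alpha_i,\alpha'_i,\alpha''_i,\beta_i,\beta'_i,\beta''_i$ is zero if $i$ is odd and nonzero if $i$ is even.
   Context: Let $V$ be a vector space over a field $\mathbb F$ with $\dim V=d+1$. A decomposition of $V$ is a sequence $(V_i)_{i=0}^d$ of one-dimensional subspaces with $V=\bigoplus V_i$; $X$ lowers it if $XV_i=V_{i-1}$ ($1\le i\le d$), $XV_0=0$; raises it if $XV_i=V_{i+1}$ ($0\le i\le d-1$), $XV_d=0$. An ordered pair $X,Y$ is an LR pair if some decomposition (unique, the $(X,Y)$-decomposition) is lowered by $X$ and raised by $Y$. An LR triple is $A,B,C\in\mathrm{End}(V)$ with $A,B$; $B,C$; $C,A$ LR pairs. With $E_i,E'_i,E''_i$ the projections onto the $i$-th components of the $(A,B)$-, $(B,C)$-, $(C,A)$-decompositions, the LR triple is bipartite if $\mathrm{tr}(CE_i)=\mathrm{tr}(AE'_i)=\mathrm{tr}(BE''_i)=0$ for all $0\le i\le d$. An $(X,Y)$-basis is a basis $(v_i)$ with $v_i$ in the $i$-th component of the $(X,Y)$-decomposition and $Xv_i=v_{i-1}$ ($1\le i\le d$). An upper triangular Toeplitz matrix with parameters $(\gamma_i)_{i=0}^d$ has $(i,k)$-entry $\gamma_{k-i}$ for $i\le k$ and $0$ otherwise; two bases are compatible if the transition matrix between them is upper triangular Toeplitz with diagonal $1$. The transition matrix from a $(C,B)$-basis to a compatible $(C,A)$-basis (resp.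 from an $(A,C)$-basis to a compatible $(A,B)$-basis; from a $(B,A)$-basis to a compatible $(B,C)$-basis) exists and is independent of choices; its parameters are $(\alpha_i)$ (resp. $(\alpha'_i)$; $(\alpha''_i)$), and those of its inverse are $(\beta_i)$ (resp. $(\beta'_i)$; $(\beta''_i)$). *)

theory Defs
  imports "Jordan_Normal_Form.Matrix"
begin

text \<open>The vector space V of dimension d+1 over the field 'a is modelled as
  carrier_vec (Suc d); endomorphisms of V are (d+1) x (d+1) matrices acting
  by X *v v.  Sequences indexed by 0..d are functions on nat; entries with
  index > d are fixed by convention (empty subspace / zero vector / zero coefficient).\<close>

definition vsum :: "nat \<Rightarrow> (nat \<Rightarrow> 'a::field vec) \<Rightarrow> 'a vec" where
  "vsum d f = vec (Suc d) (\<lambda>j. \<Sum>i\<le>d. f i $ j)"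

definition mtrace :: "'a::field mat \<Rightarrow> 'a" where
  "mtrace M = (\<Sum>i<dim_row M. M $$ (i,i))"

definition is_decomp :: "nat \<Rightarrow> (nat \<Rightarrow> 'a::field vec set) \<Rightarrow> bool" where
  "is_decomp d Vs \<longleftrightarrow>
     (\<forall>i\<le>d. \<exists>v\<in>carrier_vec (Suc d). v \<noteq> 0\<^sub>v (Suc d) \<and> Vs i = {c \<cdot>\<^sub>v v | c. True}) \<and>
     (\<forall>w\<in>carrier_vec (Suc d). \<exists>!u. (\<forall>i\<le>d. u i \<in> Vs i) \<and> (\<forall>i>d. u i = 0\<^sub>v (Suc d)) \<and> w = vsum d u) \<and>
     (\<forall>i>d. Vs i = {})"

definition lowers :: "nat \<Rightarrow> 'a::field mat \<Rightarrow> (nat \<Rightarrow> 'a vec set) \<Rightarrow> bool" where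
  "lowers d X Vs \<longleftrightarrow>
     (\<forall>i. 1 \<le> i \<and> i \<le> d \<longrightarrow> (\<lambda>v. X *\<^sub>v v) ` Vs i = Vs (i - 1)) \<and>
     (\<lambda>v. X *\<^sub>v v) ` Vs 0 = {0\<^sub>v (Suc d)}"

definition raises :: "nat \<Rightarrow> 'a::field mat \<Rightarrow> (nat \<Rightarrow> 'a vec set) \<Rightarrow> bool" where
  "raises d Y Vs \<longleftrightarrow>
     (\<forall>i<d. (\<lambda>v. Y *\<^sub>v v) ` Vs i = Vs (Suc i)) \<and>
     (\<lambda>v. Y *\<^sub>v v) ` Vs d = {0\<^sub>v (Suc d)}"

definition LR_pair :: "nat \<Rightarrow> 'a::field mat \<Rightarrow> 'a mat \<Rightarrow> bool" where
  "LR_pair d X Y \<longleftrightarrow> X \<in> carrier_mat (Suc d) (Suc d) \<and> Y \<in> carrier_mat (Suc d) (Suc d) \<and>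
     (\<exists>Vs. is_decomp d Vs \<and> lowers d X Vs \<and> raises d Y Vs)"

definition LR_decomp :: "nat \<Rightarrow> 'a::field mat \<Rightarrow> 'a mat \<Rightarrow> nat \<Rightarrow> 'a vec set" where
  "LR_decomp d X Y = (THE Vs. is_decomp d Vs \<and> lowers d X Vs \<and> raises d Y Vs)"

definition LR_triple :: "nat \<Rightarrow> 'a::field mat \<Rightarrow> 'a mat \<Rightarrow> 'a mat \<Rightarrow> bool" where
  "LR_triple d A B C \<longleftrightarrow> LR_pair d A B \<and> LR_pair d B C \<and> LR_pair d C A"

definition component :: "nat \<Rightarrow> (nat \<Rightarrow> 'a::field vec set) \<Rightarrow> nat \<Rightarrow> 'a vec \<Rightarrow> 'a vec" where
  "component d Vs i w =
     (THE u. (\<forall>j\<le>d. u j \<in> Vs j) \<and> (\<forall>j>d. u j = 0\<^sub>v (Suc d)) \<and> w = vsum d u) i"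

definition proj_mat :: "nat \<Rightarrow> (nat \<Rightarrow> 'a::field vec set) \<Rightarrow> nat \<Rightarrow> 'a mat" where
  "proj_mat d Vs i = mat (Suc d) (Suc d) (\<lambda>(r, c). component d Vs i (unit_vec (Suc d) c) $ r)"

definition bipartite_LR_triple :: "nat \<Rightarrow> 'a::field mat \<Rightarrow> 'a mat \<Rightarrow> 'a mat \<Rightarrow> bool" where
  "bipartite_LR_triple d A B C \<longleftrightarrow> LR_triple d A B C \<and>
     (\<forall>i\<le>d. mtrace (C * proj_mat d (LR_decomp d A B) i) = 0 \<and>
             mtrace (A * proj_mat d (LR_decomp d B C) i) = 0 \<and>
             mtrace (B * proj_mat d (LR_decomp d C A) i) = 0)"

definition is_basis :: "nat \<Rightarrow> (nat \<Rightarrow> 'a::field vec) \<Rightarrow> bool" where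
  "is_basis d v \<longleftrightarrow> (\<forall>i\<le>d. v i \<in> carrier_vec (Suc d)) \<and>
     (\<forall>w\<in>carrier_vec (Suc d). \<exists>!c. (\<forall>i>d. c i = 0) \<and> w = vsum d (\<lambda>i. c i \<cdot>\<^sub>v v i))"

definition LR_basis :: "nat \<Rightarrow> 'a::field mat \<Rightarrow> 'a mat \<Rightarrow> (nat \<Rightarrow> 'a vec) \<Rightarrow> bool" where
  "LR_basis d X Y v \<longleftrightarrow> is_basis d v \<and> (\<forall>i\<le>d. v i \<in> LR_decomp d X Y i) \<and>
     (\<forall>i. 1 \<le> i \<and> i \<le> d \<longrightarrow> X *\<^sub>v v i = v (i - 1))"

definition is_transition :: "nat \<Rightarrow> (nat \<Rightarrow> 'a::field vec) \<Rightarrow> (nat \<Rightarrow> 'a vec) \<Rightarrow> 'a mat \<Rightarrow> bool" where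
  "is_transition d u w T \<longleftrightarrow> T \<in> carrier_mat (Suc d) (Suc d) \<and>
     (\<forall>k\<le>d. w k = vsum d (\<lambda>i. T $$ (i, k) \<cdot>\<^sub>v u i))"

definition toeplitz :: "nat \<Rightarrow> 'a::field mat \<Rightarrow> (nat \<Rightarrow> 'a) \<Rightarrow> bool" where
  "toeplitz d T g \<longleftrightarrow> T \<in> carrier_mat (Suc d) (Suc d) \<and>
     (\<forall>i\<le>d. \<forall>k\<le>d. T $$ (i, k) = (if i \<le> k then g (k - i) else 0))"

definition trans_param :: "nat \<Rightarrow> 'a::field mat \<Rightarrow> 'a mat \<Rightarrow> 'a mat \<Rightarrow> nat \<Rightarrow> 'a" where
  "trans_param d X Y Z i = (THE x. \<exists>u w T g. LR_basis d X Y u \<and> LR_basis d X Z w \<and>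
     is_transition d u w T \<and> toeplitz d T g \<and> g 0 = 1 \<and> g i = x)"

definition trans_inv_param :: "nat \<Rightarrow> 'a::field mat \<Rightarrow> 'a mat \<Rightarrow> 'a mat \<Rightarrow> nat \<Rightarrow> 'a" where
  "trans_inv_param d X Y Z i = (THE x. \<exists>u w T g T' h. LR_basis d X Y u \<and> LR_basis d X Z w \<and>
     is_transition d u w T \<and> toeplitz d T g \<and> g 0 = 1 \<and>
     T' \<in> carrier_mat (Suc d) (Suc d) \<and> inverts_mat T T' \<and> toeplitz d T' h \<and> h i = x)"

definition alpha where "alpha d A B C i = trans_param d C B A i"
definition alpha' where "alpha' d A B C i = trans_param d A C B i"
definition alpha'' where "alpha'' d A B C i = trans_param d B A C i"
definition beta where "beta d A B C i = trans_inv_param d C B A i"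
definition beta' where "beta' d A B C i = trans_inv_param d A C B i"
definition beta'' where "beta'' d A B C i = trans_inv_param d B A C i"

end

theory Submission
  imports Defs
begin

text \<open>
  Let \<open>u\<close> be a \<open>(C,B)\<close>-basis and \<open>w\<close> a compatible \<open>(C,A)\<close>-basis, so that
  \<open>w\<^sub>k = \<Sum>\<^sub>i \<alpha>\<^sub>k\<^sub>-\<^sub>i u\<^sub>i\<close>, and compare the \<open>u\<^sub>0\<close>-coordinates of \<open>A w\<^sub>k\<close>.
  Since \<open>A\<close> raises \<open>w\<close>, the vector \<open>A w\<^sub>k\<close> is a nonzero multiple of \<open>w\<^sub>k\<^sub>+\<^sub>1\<close>, whose
  \<open>u\<^sub>0\<close>-coordinate is \<open>\<alpha>\<^sub>k\<^sub>+\<^sub>1\<close>. On the other hand \<open>u\<^sub>i \<in> B\<^sup>2V\<close> for \<open>i \<ge> 2\<close> and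
  \<open>AB\<^sup>2V \<subseteq> BV\<close>, a subspace with vanishing \<open>u\<^sub>0\<close>-coordinate, while the \<open>u\<^sub>0\<close>-coordinate of
  \<open>A u\<^sub>0\<close> is \<open>tr(A E'\<^sub>d) = 0\<close> by bipartiteness. Only \<open>u\<^sub>1\<close> contributes, so \<open>\<alpha>\<^sub>k\<^sub>+\<^sub>1\<close>
  is a nonzero multiple of \<open>\<alpha>\<^sub>k\<^sub>-\<^sub>1 p\<close> for a fixed scalar \<open>p\<close>. As \<open>\<alpha>\<^sub>0 = 1\<close> and
  \<open>\<alpha>\<^sub>d \<noteq> 0\<close> (because \<open>w\<^sub>d \<in> ker A\<close> and \<open>ABz = 0\<close> forces \<open>Bz = 0\<close>), this recurrence
  makes \<open>d\<close> even and gives the parity pattern. Exchanging the roles of \<open>u\<close> and \<open>w\<close> treats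
  the \<open>\<beta>\<^sub>i\<close>, and rotating \<open>(A,B,C)\<close> treats the primed parameters.
\<close>

section \<open>Finite sums of vectors and coordinates\<close>

lemma vsum_carrier [simp]: "vsum d f \<in> carrier_vec (Suc d)"
  unfolding vsum_def by simp

lemma dim_vsum [simp]: "dim_vec (vsum d f) = Suc d"
  unfolding vsum_def by simp

lemma index_vsum: "j < Suc d \<Longrightarrow> vsum d f $ j = (\<Sum>i\<le>d. f i $ j)"
  unfolding vsum_def by simp

lemma vsum_cong: "(\<And>i. i \<le> d \<Longrightarrow> f i = g i) \<Longrightarrow> vsum d f = vsum d g"
  unfolding vsum_def by (rule arg_cong[where f = "vec (Suc d)"]) auto

lemma vsum_zero: "(\<And>i. i \<le> d \<Longrightarrow> f i = 0\<^sub>v (Suc d)) \<Longrightarrow> vsum d f = 0\<^sub>v (Suc d)"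
  by (rule eq_vecI) (auto simp: index_vsum)

lemma vsum_single:
  assumes "k \<le> d" "f k \<in> carrier_vec (Suc d)" "\<And>i. i \<le> d \<Longrightarrow> i \<noteq> k \<Longrightarrow> f i = 0\<^sub>v (Suc d)"
  shows "vsum d f = f k"
proof (rule eq_vecI)
  fix j assume "j < dim_vec (f k)"
  then have j: "j < Suc d" using assms(2) by auto
  have "(\<Sum>i\<le>d. f i $ j) = f k $ j + (\<Sum>i\<in>{..d} - {k}. f i $ j)"
    using assms(1) by (simp add: sum.remove)
  also have "(\<Sum>i\<in>{..d} - {k}. f i $ j) = 0"
    using assms(3) j by (intro sum.neutral) auto
  finally show "vsum d f $ j = f k $ j" using j by (simp add: index_vsum)
qed (use assms in auto)

lemma smult_vsum:
  assumes "\<And>i. i \<le> d \<Longrightarrow> F i \<in> carrier_vec (Suc d)"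
  shows "a \<cdot>\<^sub>v vsum d F = vsum d (\<lambda>i. a \<cdot>\<^sub>v F i)"
proof (rule eq_vecI)
  fix j assume "j < dim_vec (vsum d (\<lambda>i. a \<cdot>\<^sub>v F i))"
  then have j: "j < Suc d" by simp
  have "\<And>i. i \<le> d \<Longrightarrow> j < dim_vec (F i)" using assms j by (metis carrier_vecD)
  then show "(a \<cdot>\<^sub>v vsum d F) $ j = vsum d (\<lambda>i. a \<cdot>\<^sub>v F i) $ j"
    using j by (simp add: index_vsum sum_distrib_left)
qed simp

lemma mult_mat_vec_vsum:
  assumes M: "M \<in> carrier_mat (Suc d) (Suc d)"
    and F: "\<And>i. i \<le> d \<Longrightarrow> F i \<in> carrier_vec (Suc d)"
  shows "M *\<^sub>v vsum d (\<lambda>i. c i \<cdot>\<^sub>v F i) = vsum d (\<lambda>i. c i \<cdot>\<^sub>v (M *\<^sub>v F i))"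
proof (rule eq_vecI)
  fix j assume "j < dim_vec (vsum d (\<lambda>i. c i \<cdot>\<^sub>v (M *\<^sub>v F i)))"
  then have j: "j < Suc d" by simp
  have F': "\<And>i. i \<le> d \<Longrightarrow> dim_vec (F i) = Suc d" using F by (metis carrier_vecD)
  have "(M *\<^sub>v vsum d (\<lambda>i. c i \<cdot>\<^sub>v F i)) $ j = (\<Sum>k<Suc d. M $$ (j, k) * (\<Sum>i\<le>d. c i * F i $ k))"
    using M j F' by (simp add: scalar_prod_def index_vsum atLeast0LessThan)
  also have "\<dots> = (\<Sum>i\<le>d. c i * (\<Sum>k<Suc d. M $$ (j, k) * F i $ k))"
    unfolding sum_distrib_left by (subst sum.swap) (simp add: mult.left_commute)
  also have "\<dots> = vsum d (\<lambda>i. c i \<cdot>\<^sub>v (M *\<^sub>v F i)) $ j"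
    using M j F' by (simp add: index_vsum scalar_prod_def atLeast0LessThan del: sum.lessThan_Suc)
  finally show "(M *\<^sub>v vsum d (\<lambda>i. c i \<cdot>\<^sub>v F i)) $ j = vsum d (\<lambda>i. c i \<cdot>\<^sub>v (M *\<^sub>v F i)) $ j" .
qed (use M in auto)

lemma vsum_smult_vsum:
  assumes "\<And>k. k \<le> d \<Longrightarrow> u k \<in> carrier_vec (Suc d)"
  shows "vsum d (\<lambda>i. c i \<cdot>\<^sub>v vsum d (\<lambda>k. e i k \<cdot>\<^sub>v u k)) = vsum d (\<lambda>k. (\<Sum>i\<le>d. c i * e i k) \<cdot>\<^sub>v u k)"
proof (rule eq_vecI)
  fix j assume "j < dim_vec (vsum d (\<lambda>k. (\<Sum>i\<le>d. c i * e i k) \<cdot>\<^sub>v u k))"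
  then have j: "j < Suc d" by simp
  have uj: "\<And>k. k \<le> d \<Longrightarrow> j < dim_vec (u k)" using assms j by (metis carrier_vecD)
  have "(\<Sum>i\<le>d. c i * (\<Sum>k\<le>d. e i k * u k $ j)) = (\<Sum>i\<le>d. \<Sum>k\<le>d. c i * e i k * u k $ j)"
    by (simp add: sum_distrib_left mult.assoc)
  also have "\<dots> = (\<Sum>k\<le>d. \<Sum>i\<le>d. c i * e i k * u k $ j)" by (rule sum.swap)
  also have "\<dots> = (\<Sum>k\<le>d. (\<Sum>i\<le>d. c i * e i k) * u k $ j)" by (simp add: sum_distrib_right)
  finally show "vsum d (\<lambda>i. c i \<cdot>\<^sub>v vsum d (\<lambda>k. e i k \<cdot>\<^sub>v u k)) $ j =
      vsum d (\<lambda>k. (\<Sum>i\<le>d. c i * e i k) \<cdot>\<^sub>v u k) $ j"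
    using j uj by (simp add: index_vsum)
qed simp

lemma vsum_reverse: "vsum d (\<lambda>i. c i \<cdot>\<^sub>v u (d - i)) = vsum d (\<lambda>i. c (d - i) \<cdot>\<^sub>v u i)"
  unfolding vsum_def
  by (rule arg_cong[where f = "vec (Suc d)"], rule ext, rule sum.reindex_bij_witness[of _ "\<lambda>i. d - i" "\<lambda>i. d - i"]) auto

lemma vsum_unit_vec:
  assumes "x \<in> carrier_vec (Suc d)"
  shows "vsum d (\<lambda>r. x $ r \<cdot>\<^sub>v unit_vec (Suc d) r) = x"
proof (rule eq_vecI)
  fix j assume "j < dim_vec x"
  then have j: "j < Suc d" using assms by auto
  have "(\<Sum>i\<le>d. (x $ i \<cdot>\<^sub>v unit_vec (Suc d) i) $ j) = (\<Sum>i\<le>d. if i = j then x $ j else 0)"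
    by (rule sum.cong) (use j in auto)
  then show "vsum d (\<lambda>r. x $ r \<cdot>\<^sub>v unit_vec (Suc d) r) $ j = x $ j"
    using j by (simp add: index_vsum)
qed (use assms in auto)

lemma zero_smult_vec: "v \<in> carrier_vec n \<Longrightarrow> (0::'a::field) \<cdot>\<^sub>v v = 0\<^sub>v n"
  by auto

lemma smult_vec_cancel:
  fixes a b :: "'a::field"
  assumes "v \<in> carrier_vec n" "v \<noteq> 0\<^sub>v n" "a \<cdot>\<^sub>v v = b \<cdot>\<^sub>v v"
  shows "a = b"
proof -
  obtain j where j: "j < n" "v $ j \<noteq> 0"
    using assms(1,2) by (metis carrier_vecD eq_vecI index_zero_vec)
  have "(a \<cdot>\<^sub>v v) $ j = (b \<cdot>\<^sub>v v) $ j" using assms(3) by simp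
  then show ?thesis using j assms(1) by simp
qed

lemma smult_vec_eq_zero_iff:
  fixes a :: "'a::field"
  assumes "v \<in> carrier_vec n"
  shows "a \<cdot>\<^sub>v v = 0\<^sub>v n \<longleftrightarrow> a = 0 \<or> v = 0\<^sub>v n"
proof
  assume av: "a \<cdot>\<^sub>v v = 0\<^sub>v n"
  show "a = 0 \<or> v = 0\<^sub>v n"
  proof (cases "a = 0")
    case False
    have "v = (1 / a) \<cdot>\<^sub>v (a \<cdot>\<^sub>v v)" using assms False by (simp add: smult_smult_assoc)
    then show ?thesis using av by auto
  qed simp
qed (use assms in auto)

definition coord :: "nat \<Rightarrow> (nat \<Rightarrow> 'a::field vec) \<Rightarrow> 'a vec \<Rightarrow> nat \<Rightarrow> 'a" where
  "coord d u x = (THE c. (\<forall>i>d. c i = 0) \<and> x = vsum d (\<lambda>i. c i \<cdot>\<^sub>v u i))"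

lemma basis_carrier: "is_basis d u \<Longrightarrow> i \<le> d \<Longrightarrow> u i \<in> carrier_vec (Suc d)"
  unfolding is_basis_def by blast

lemma coord_spec:
  assumes "is_basis d u" "x \<in> carrier_vec (Suc d)"
  shows "(\<forall>i>d. coord d u x i = 0) \<and> x = vsum d (\<lambda>i. coord d u x i \<cdot>\<^sub>v u i)"
proof -
  have "\<exists>!c. (\<forall>i>d. c i = 0) \<and> x = vsum d (\<lambda>i. c i \<cdot>\<^sub>v u i)"
    using assms unfolding is_basis_def by blast
  from theI'[OF this] show ?thesis unfolding coord_def .
qed

lemma coord_repr: "is_basis d u \<Longrightarrow> x \<in> carrier_vec (Suc d) \<Longrightarrow> x = vsum d (\<lambda>i. coord d u x i \<cdot>\<^sub>v u i)"
  using coord_spec by blast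

lemma coord_eqI:
  assumes B: "is_basis d u" and x: "x = vsum d (\<lambda>i. c i \<cdot>\<^sub>v u i)" and j: "j \<le> d"
  shows "coord d u x j = c j"
proof -
  define c' where "c' i = (if i \<le> d then c i else 0)" for i
  have uniq: "\<exists>!c. (\<forall>i>d. c i = 0) \<and> x = vsum d (\<lambda>i. c i \<cdot>\<^sub>v u i)"
    using B x unfolding is_basis_def by simp
  have "x = vsum d (\<lambda>i. c' i \<cdot>\<^sub>v u i)"
    unfolding x c'_def by (rule vsum_cong) simp
  then have c': "(\<forall>i>d. c' i = 0) \<and> x = vsum d (\<lambda>i. c' i \<cdot>\<^sub>v u i)" by (simp add: c'_def)
  have coord: "(\<forall>i>d. coord d u x i = 0) \<and> x = vsum d (\<lambda>i. coord d u x i \<cdot>\<^sub>v u i)"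
    using coord_spec[OF B] x by simp
  have "coord d u x = c'"
    using uniq
  proof (rule ex1E)
    fix c0 assume "\<forall>c. (\<forall>i>d. c i = 0) \<and> x = vsum d (\<lambda>i. c i \<cdot>\<^sub>v u i) \<longrightarrow> c = c0"
    then have "coord d u x = c0" "c' = c0" using coord c' by blast+
    then show ?thesis by simp
  qed
  then show ?thesis using j by (simp add: c'_def)
qed

lemma coord_vsum:
  assumes B: "is_basis d u" and z: "\<And>i. i \<le> d \<Longrightarrow> z i \<in> carrier_vec (Suc d)" and j: "j \<le> d"
  shows "coord d u (vsum d (\<lambda>i. c i \<cdot>\<^sub>v z i)) j = (\<Sum>i\<le>d. c i * coord d u (z i) j)"
proof -
  have "vsum d (\<lambda>i. c i \<cdot>\<^sub>v z i) = vsum d (\<lambda>i. c i \<cdot>\<^sub>v vsum d (\<lambda>k. coord d u (z i) k \<cdot>\<^sub>v u k))"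
    by (rule vsum_cong) (use coord_repr[OF B z] in auto)
  also have "\<dots> = vsum d (\<lambda>k. (\<Sum>i\<le>d. c i * coord d u (z i) k) \<cdot>\<^sub>v u k)"
    by (rule vsum_smult_vsum) (rule basis_carrier[OF B])
  finally show ?thesis by (rule coord_eqI[OF B _ j])
qed

lemma coord_basis:
  assumes B: "is_basis d u" and "k \<le> d" "j \<le> d"
  shows "coord d u (u k) j = (if j = k then 1 else 0)"
proof -
  have "vsum d (\<lambda>i. (if i = k then 1 else 0) \<cdot>\<^sub>v u i) = u k"
    by (subst vsum_single[of k]) (use assms basis_carrier[OF B] zero_smult_vec in auto)
  from coord_eqI[OF B this[symmetric] \<open>j \<le> d\<close>] show ?thesis .
qed

lemma coord_zero:
  assumes B: "is_basis d u" and j: "j \<le> d"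
  shows "coord d u (0\<^sub>v (Suc d)) j = 0"
proof -
  have "0\<^sub>v (Suc d) = vsum d (\<lambda>i. 0 \<cdot>\<^sub>v u i)"
    by (rule sym, rule vsum_zero) (use basis_carrier[OF B] zero_smult_vec in auto)
  from coord_eqI[OF B this j] show ?thesis .
qed

lemma coord_smult:
  assumes B: "is_basis d u" and x: "x \<in> carrier_vec (Suc d)" and j: "j \<le> d"
  shows "coord d u (a \<cdot>\<^sub>v x) j = a * coord d u x j"
proof -
  have "a \<cdot>\<^sub>v x = vsum d (\<lambda>i. a \<cdot>\<^sub>v (coord d u x i \<cdot>\<^sub>v u i))"
    by (subst coord_repr[OF B x], rule smult_vsum) (use basis_carrier[OF B] in simp)
  also have "\<dots> = vsum d (\<lambda>i. (a * coord d u x i) \<cdot>\<^sub>v u i)"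
    by (rule vsum_cong) (simp add: smult_smult_assoc)
  finally show ?thesis by (rule coord_eqI[OF B _ j])
qed

lemma vec_eq_coordI:
  assumes B: "is_basis d u" and "x \<in> carrier_vec (Suc d)" "y \<in> carrier_vec (Suc d)"
    and "\<And>j. j \<le> d \<Longrightarrow> coord d u x j = coord d u y j"
  shows "x = y"
proof -
  have "vsum d (\<lambda>i. coord d u x i \<cdot>\<^sub>v u i) = vsum d (\<lambda>i. coord d u y i \<cdot>\<^sub>v u i)"
    using assms(4) by (intro vsum_cong) simp
  then show ?thesis using coord_repr[OF B assms(2)] coord_repr[OF B assms(3)] by simp
qed

lemma coord_cong:
  assumes "\<And>i. i \<le> d \<Longrightarrow> u i = u' i"
  shows "coord d u = coord d u'"
proof -
  have "vsum d (\<lambda>i. c i \<cdot>\<^sub>v u i) = vsum d (\<lambda>i. c i \<cdot>\<^sub>v u' i)" for c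
    by (rule vsum_cong) (simp add: assms)
  then show ?thesis unfolding coord_def by simp
qed

lemma basis_nonzero:
  assumes B: "is_basis d u" and k: "k \<le> d"
  shows "u k \<noteq> 0\<^sub>v (Suc d)"
  using coord_basis[OF B k k] coord_zero[OF B k] by auto

lemma basis_reverse:
  assumes B: "is_basis d u"
  shows "is_basis d (\<lambda>i. u (d - i))"
  unfolding is_basis_def
proof (intro conjI allI impI ballI)
  fix i assume "i \<le> d" then show "u (d - i) \<in> carrier_vec (Suc d)" using basis_carrier[OF B] by simp
next
  fix w :: "'a vec" assume w: "w \<in> carrier_vec (Suc d)"
  define c where "c i = (if i \<le> d then coord d u w (d - i) else 0)" for i
  show "\<exists>!c. (\<forall>i>d. c i = 0) \<and> w = vsum d (\<lambda>i. c i \<cdot>\<^sub>v u (d - i))"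
  proof (rule ex1I[of _ c])
    have "vsum d (\<lambda>i. c i \<cdot>\<^sub>v u (d - i)) = vsum d (\<lambda>i. coord d u w i \<cdot>\<^sub>v u i)"
      unfolding vsum_reverse by (rule vsum_cong) (simp add: c_def)
    then show "(\<forall>i>d. c i = 0) \<and> w = vsum d (\<lambda>i. c i \<cdot>\<^sub>v u (d - i))"
      using coord_repr[OF B w] unfolding c_def by simp
  next
    fix c' assume c': "(\<forall>i>d. c' i = 0) \<and> w = vsum d (\<lambda>i. c' i \<cdot>\<^sub>v u (d - i))"
    then have "coord d u w i = c' (d - i)" if "i \<le> d" for i
      using coord_eqI[OF B _ that] vsum_reverse[of d c' u] by simp
    then show "c' = c"
      using c' unfolding c_def by (metis diff_diff_cancel diff_le_self not_le)
  qed
qed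

lemma coord_reverse:
  assumes B: "is_basis d u" and w: "w \<in> carrier_vec (Suc d)" and j: "j \<le> d"
  shows "coord d (\<lambda>i. u (d - i)) w j = coord d u w (d - j)"
proof -
  have "vsum d (\<lambda>i. coord d u w (d - i) \<cdot>\<^sub>v u (d - i)) = vsum d (\<lambda>i. coord d u w (d - (d - i)) \<cdot>\<^sub>v u i)"
    by (rule vsum_reverse)
  also have "\<dots> = vsum d (\<lambda>i. coord d u w i \<cdot>\<^sub>v u i)" by (rule vsum_cong) simp
  also have "\<dots> = w" using coord_repr[OF B w] by simp
  finally show ?thesis by (intro coord_eqI[OF basis_reverse[OF B] _ j]) simp
qed

section \<open>Lines and decompositions\<close>

definition span1 :: "'a::field vec \<Rightarrow> 'a vec set" where
  "span1 v = {c \<cdot>\<^sub>v v | c. True}"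

definition lines_of :: "nat \<Rightarrow> (nat \<Rightarrow> 'a::field vec) \<Rightarrow> nat \<Rightarrow> 'a vec set" where
  "lines_of d u i = (if i \<le> d then span1 (u i) else {})"

lemma in_span1_iff: "y \<in> span1 v \<longleftrightarrow> (\<exists>c. y = c \<cdot>\<^sub>v v)"
  unfolding span1_def by blast

lemma span1_smult [simp]: "c \<cdot>\<^sub>v v \<in> span1 v"
  unfolding span1_def by blast

lemma self_in_span1: "v \<in> span1 v"
  using span1_smult[of 1 v] by simp

lemma span1_eq:
  assumes v: "v \<in> carrier_vec n" and "u \<in> span1 v" "u \<noteq> 0\<^sub>v n"
  shows "span1 u = span1 v"
proof -
  obtain c where c: "u = c \<cdot>\<^sub>v v" using assms(2) by (auto simp: in_span1_iff)
  have "c \<noteq> 0" using c assms(3) v by auto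
  have "a \<cdot>\<^sub>v v = (a / c) \<cdot>\<^sub>v u" for a
    unfolding c using \<open>c \<noteq> 0\<close> by (simp add: smult_smult_assoc)
  moreover have "a \<cdot>\<^sub>v u = (a * c) \<cdot>\<^sub>v v" for a
    unfolding c by (simp add: smult_smult_assoc)
  ultimately show ?thesis unfolding in_span1_iff set_eq_iff by metis
qed

lemma image_span1:
  assumes "X \<in> carrier_mat n n" "v \<in> carrier_vec n"
  shows "(\<lambda>x. X *\<^sub>v x) ` span1 v = span1 (X *\<^sub>v v)"
proof (intro equalityI subsetI)
  fix y assume "y \<in> (\<lambda>x. X *\<^sub>v x) ` span1 v"
  then obtain c where "y = X *\<^sub>v (c \<cdot>\<^sub>v v)" by (auto simp: in_span1_iff)
  then show "y \<in> span1 (X *\<^sub>v v)" using mult_mat_vec[OF assms] by simp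
next
  fix y assume "y \<in> span1 (X *\<^sub>v v)"
  then obtain c where "y = c \<cdot>\<^sub>v (X *\<^sub>v v)" by (auto simp: in_span1_iff)
  then have "y = X *\<^sub>v (c \<cdot>\<^sub>v v)" using mult_mat_vec[OF assms] by simp
  then show "y \<in> (\<lambda>x. X *\<^sub>v x) ` span1 v" by (rule image_eqI[OF _ span1_smult])
qed

lemma decomp_line:
  "is_decomp d Vs \<Longrightarrow> i \<le> d \<Longrightarrow> \<exists>v\<in>carrier_vec (Suc d). v \<noteq> 0\<^sub>v (Suc d) \<and> Vs i = span1 v"
  unfolding is_decomp_def span1_def by blast

lemma decomp_beyond: "is_decomp d Vs \<Longrightarrow> d < i \<Longrightarrow> Vs i = {}"
  unfolding is_decomp_def by blast

lemma lines_of_components_iff: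
  assumes B: "is_basis d y" and x: "x \<in> carrier_vec (Suc d)"
  shows "((\<forall>j\<le>d. p j \<in> lines_of d y j) \<and> (\<forall>j>d. p j = 0\<^sub>v (Suc d)) \<and> x = vsum d p) \<longleftrightarrow>
    p = (\<lambda>j. if j \<le> d then coord d y x j \<cdot>\<^sub>v y j else 0\<^sub>v (Suc d))" (is "?P \<longleftrightarrow> _")
proof
  assume P: ?P
  define c where "c j = (SOME a. p j = a \<cdot>\<^sub>v y j)" for j
  have p: "p j = c j \<cdot>\<^sub>v y j" if "j \<le> d" for j
  proof -
    have "\<exists>a. p j = a \<cdot>\<^sub>v y j" using P that unfolding lines_of_def by (simp add: in_span1_iff)
    then show ?thesis unfolding c_def by (rule someI_ex)
  qed
  have "x = vsum d (\<lambda>j. c j \<cdot>\<^sub>v y j)" using P p vsum_cong[of d p] by simp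
  then have "coord d y x j = c j" if "j \<le> d" for j using coord_eqI[OF B _ that] by simp
  then show "p = (\<lambda>j. if j \<le> d then coord d y x j \<cdot>\<^sub>v y j else 0\<^sub>v (Suc d))"
    using P p by auto
next
  assume "p = (\<lambda>j. if j \<le> d then coord d y x j \<cdot>\<^sub>v y j else 0\<^sub>v (Suc d))"
  moreover have "vsum d (\<lambda>j. if j \<le> d then coord d y x j \<cdot>\<^sub>v y j else 0\<^sub>v (Suc d)) = x"
    by (subst coord_repr[OF B x], rule vsum_cong) simp
  ultimately show ?P unfolding lines_of_def by auto
qed

lemma is_decomp_lines_of:
  assumes B: "is_basis d y"
  shows "is_decomp d (lines_of d y)"
  unfolding is_decomp_def
proof (intro conjI allI impI ballI)
  fix i assume "i \<le> d"
  then show "\<exists>v\<in>carrier_vec (Suc d). v \<noteq> 0\<^sub>v (Suc d) \<and> lines_of d y i = {c \<cdot>\<^sub>v v |c. True}"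
    using basis_carrier[OF B] basis_nonzero[OF B] unfolding lines_of_def span1_def by auto
next
  fix w :: "'a vec" assume "w \<in> carrier_vec (Suc d)"
  show "\<exists>!p. (\<forall>i\<le>d. p i \<in> lines_of d y i) \<and> (\<forall>i>d. p i = 0\<^sub>v (Suc d)) \<and> w = vsum d p"
    by (simp only: lines_of_components_iff[OF B \<open>w \<in> carrier_vec (Suc d)\<close>]) simp
qed (simp add: lines_of_def)

lemma component_lines_of:
  assumes B: "is_basis d y" and x: "x \<in> carrier_vec (Suc d)" and i: "i \<le> d"
  shows "component d (lines_of d y) i x = coord d y x i \<cdot>\<^sub>v y i"
proof -
  have "(THE p. (\<forall>j\<le>d. p j \<in> lines_of d y j) \<and> (\<forall>j>d. p j = 0\<^sub>v (Suc d)) \<and> x = vsum d p) =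
      (\<lambda>j. if j \<le> d then coord d y x j \<cdot>\<^sub>v y j else 0\<^sub>v (Suc d))"
    using lines_of_components_iff[OF B x] by simp
  then show ?thesis unfolding component_def using i by simp
qed

lemma trace_mult_proj_mat:
  assumes B: "is_basis d y" and M: "M \<in> carrier_mat (Suc d) (Suc d)" and i: "i \<le> d"
  shows "mtrace (M * proj_mat d (lines_of d y) i) = coord d y (M *\<^sub>v y i) i"
proof -
  let ?P = "proj_mat d (lines_of d y) i" and ?e = "\<lambda>r. coord d y (unit_vec (Suc d) r) i"
  have yi: "y i \<in> carrier_vec (Suc d)" by (rule basis_carrier[OF B i])
  have P: "?P $$ (r, c) = ?e c * y i $ r" if "r < Suc d" "c < Suc d" for r c
    unfolding proj_mat_def using component_lines_of[OF B _ i] yi that by simp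
  have diag: "(M * ?P) $$ (r, r) = ?e r * (M *\<^sub>v y i) $ r" if r: "r < Suc d" for r
  proof -
    have "(M * ?P) $$ (r, r) = (\<Sum>k<Suc d. M $$ (r, k) * ?P $$ (k, r))"
      using M r by (simp add: proj_mat_def scalar_prod_def atLeast0LessThan del: sum.lessThan_Suc)
    also have "\<dots> = (\<Sum>k<Suc d. ?e r * (M $$ (r, k) * y i $ k))"
      by (rule sum.cong) (use P r in auto)
    also have "\<dots> = ?e r * (M *\<^sub>v y i) $ r"
      using M r yi by (simp add: scalar_prod_def atLeast0LessThan sum_distrib_left del: sum.lessThan_Suc)
    finally show ?thesis .
  qed
  have "mtrace (M * ?P) = (\<Sum>r\<le>d. (M *\<^sub>v y i) $ r * ?e r)"
    unfolding mtrace_def using M diag by (simp add: lessThan_Suc_atMost[symmetric] mult.commute)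
  also have "\<dots> = coord d y (vsum d (\<lambda>r. (M *\<^sub>v y i) $ r \<cdot>\<^sub>v unit_vec (Suc d) r)) i"
    by (rule coord_vsum[OF B _ i, symmetric]) simp
  also have "\<dots> = coord d y (M *\<^sub>v y i) i"
    using vsum_unit_vec[OF mult_mat_vec_carrier[OF M yi]] by simp
  finally show ?thesis .
qed

lemma decomp_eq_lines_of_basis:
  assumes dec: "is_decomp d Vs" and lines: "\<And>i. i \<le> d \<Longrightarrow> Vs i = span1 (u i)"
  shows "Vs = lines_of d u"
proof
  fix i show "Vs i = lines_of d u i"
    by (cases "i \<le> d") (simp_all add: lines_of_def lines decomp_beyond[OF dec])
qed

lemma decomp_coeffs_exist:
  assumes dec: "is_decomp d Vs" and lines: "\<And>i. i \<le> d \<Longrightarrow> Vs i = span1 (u i)"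
    and w: "w \<in> carrier_vec (Suc d)"
  shows "\<exists>c. (\<forall>i>d. c i = 0) \<and> w = vsum d (\<lambda>i. c i \<cdot>\<^sub>v u i)"
proof -
  obtain p where p: "\<forall>i\<le>d. p i \<in> Vs i" "w = vsum d p"
    using dec w unfolding is_decomp_def by blast
  define c where "c i = (if i \<le> d then SOME a. p i = a \<cdot>\<^sub>v u i else 0)" for i
  have "p i = c i \<cdot>\<^sub>v u i" if "i \<le> d" for i
  proof -
    have "\<exists>a. p i = a \<cdot>\<^sub>v u i" using p that lines by (simp add: in_span1_iff)
    then show ?thesis unfolding c_def using that by (auto intro: someI_ex)
  qed
  then have "w = vsum d (\<lambda>i. c i \<cdot>\<^sub>v u i)" using p(2) vsum_cong[of d p] by simp
  then show ?thesis by (intro exI[of _ c]) (simp add: c_def)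
qed

lemma decomp_coeffs_unique:
  assumes dec: "is_decomp d Vs" and lines: "\<And>i. i \<le> d \<Longrightarrow> Vs i = span1 (u i)"
    and car: "\<And>i. i \<le> d \<Longrightarrow> u i \<in> carrier_vec (Suc d)"
    and nz: "\<And>i. i \<le> d \<Longrightarrow> u i \<noteq> 0\<^sub>v (Suc d)"
    and c: "vsum d (\<lambda>i. c i \<cdot>\<^sub>v u i) = vsum d (\<lambda>i. c' i \<cdot>\<^sub>v u i)" and i: "i \<le> d"
  shows "c i = c' i"
proof -
  let ?w = "vsum d (\<lambda>i. c i \<cdot>\<^sub>v u i)"
  let ?split = "\<lambda>c i. if i \<le> d then c i \<cdot>\<^sub>v u i else 0\<^sub>v (Suc d)"
  let ?splits = "\<lambda>p. (\<forall>i\<le>d. p i \<in> Vs i) \<and> (\<forall>i>d. p i = 0\<^sub>v (Suc d)) \<and> ?w = vsum d p"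
  have ex1: "\<exists>!p. ?splits p" using dec unfolding is_decomp_def by simp
  have "vsum d (?split c'') = vsum d (\<lambda>i. c'' i \<cdot>\<^sub>v u i)" for c'' by (rule vsum_cong) simp
  then have splits: "?splits (?split c)" "?splits (?split c')" using lines c by simp_all
  have "?split c = ?split c'"
    using ex1
  proof (rule ex1E)
    fix p assume uniq: "\<forall>q. ?splits q \<longrightarrow> q = p"
    have "?split c = p" by (rule mp[OF spec[OF uniq] splits(1)])
    moreover have "?split c' = p" by (rule mp[OF spec[OF uniq] splits(2)])
    ultimately show "?split c = ?split c'" by simp
  qed
  then have "c i \<cdot>\<^sub>v u i = c' i \<cdot>\<^sub>v u i" using fun_cong[of "?split c" "?split c'" i] i by simp
  then show ?thesis using smult_vec_cancel[OF car[OF i] nz[OF i]] by blast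
qed

lemma is_basis_of_decomp:
  assumes dec: "is_decomp d Vs" and lines: "\<And>i. i \<le> d \<Longrightarrow> Vs i = span1 (u i)"
    and car: "\<And>i. i \<le> d \<Longrightarrow> u i \<in> carrier_vec (Suc d)"
    and nz: "\<And>i. i \<le> d \<Longrightarrow> u i \<noteq> 0\<^sub>v (Suc d)"
  shows "is_basis d u"
  unfolding is_basis_def
proof (intro conjI allI impI ballI car)
  fix w :: "'a vec" assume w: "w \<in> carrier_vec (Suc d)"
  obtain c where c: "(\<forall>i>d. c i = 0) \<and> w = vsum d (\<lambda>i. c i \<cdot>\<^sub>v u i)"
    using decomp_coeffs_exist[OF dec lines w] by blast
  show "\<exists>!c. (\<forall>i>d. c i = 0) \<and> w = vsum d (\<lambda>i. c i \<cdot>\<^sub>v u i)"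
  proof (rule ex1I[of _ c])
    fix c' assume c': "(\<forall>i>d. c' i = 0) \<and> w = vsum d (\<lambda>i. c' i \<cdot>\<^sub>v u i)"
    have "c' i = c i" for i
      using decomp_coeffs_unique[OF dec lines car nz, of c' c i] c c' by (cases "i \<le> d") auto
    then show "c' = c" by blast
  qed (rule c)
qed

lemma lines_of_smult:
  assumes B: "is_basis d u" and a: "a \<noteq> 0"
  shows "lines_of d (\<lambda>i. a \<cdot>\<^sub>v u i) = lines_of d u"
proof
  fix i show "lines_of d (\<lambda>i. a \<cdot>\<^sub>v u i) i = lines_of d u i"
    using span1_eq[OF basis_carrier[OF B], of i "a \<cdot>\<^sub>v u i"] basis_nonzero[OF B, of i]
      basis_carrier[OF B, of i] a smult_vec_eq_zero_iff[of "u i" "Suc d" a]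
    unfolding lines_of_def by auto
qed

section \<open>Bases adapted to an LR pair\<close>

text \<open>The paper's \<open>(X,Y)\<close>-basis, phrased without the definite description in
  \<open>LR_decomp\<close>; \<open>LR_basis_iff\<close> relates the two notions.\<close>

locale LR_chain_basis =
  fixes d :: nat and X Y :: "'a::field mat" and u :: "nat \<Rightarrow> 'a vec"
  assumes X_carrier: "X \<in> carrier_mat (Suc d) (Suc d)"
    and Y_carrier: "Y \<in> carrier_mat (Suc d) (Suc d)"
    and basis: "is_basis d u"
    and lowers: "lowers d X (lines_of d u)"
    and raises: "raises d Y (lines_of d u)"
    and lower_step: "\<And>i. 1 \<le> i \<Longrightarrow> i \<le> d \<Longrightarrow> X *\<^sub>v u i = u (i - 1)"
begin

lemma u_carrier: "i \<le> d \<Longrightarrow> u i \<in> carrier_vec (Suc d)"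
  using basis_carrier[OF basis] .

lemma u_nonzero: "i \<le> d \<Longrightarrow> u i \<noteq> 0\<^sub>v (Suc d)"
  using basis_nonzero[OF basis] .

lemma X_mult_carrier [simp]: "X *\<^sub>v x \<in> carrier_vec (Suc d)"
  using X_carrier by (intro carrier_vecI) auto

lemma Y_mult_carrier [simp]: "Y *\<^sub>v x \<in> carrier_vec (Suc d)"
  using Y_carrier by (intro carrier_vecI) auto

lemma lower_first: "X *\<^sub>v u 0 = 0\<^sub>v (Suc d)"
  using lowers self_in_span1[of "u 0"] unfolding lowers_def lines_of_def by auto

lemma raise_last: "Y *\<^sub>v u d = 0\<^sub>v (Suc d)"
  using raises self_in_span1[of "u d"] unfolding raises_def lines_of_def by auto

lemma raise_step:
  assumes i: "i < d"
  shows "\<exists>b. b \<noteq> 0 \<and> Y *\<^sub>v u i = b \<cdot>\<^sub>v u (Suc i)"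
proof -
  have lines: "span1 (Y *\<^sub>v u i) = span1 (u (Suc i))"
    using raises i image_span1[OF Y_carrier u_carrier[of i]] unfolding raises_def lines_of_def by auto
  then obtain b where b: "Y *\<^sub>v u i = b \<cdot>\<^sub>v u (Suc i)"
    using self_in_span1[of "Y *\<^sub>v u i"] by (auto simp: in_span1_iff)
  have "u (Suc i) \<in> span1 (Y *\<^sub>v u i)" using lines self_in_span1 by simp
  then obtain a where "u (Suc i) = a \<cdot>\<^sub>v (Y *\<^sub>v u i)" by (auto simp: in_span1_iff)
  then have "b \<noteq> 0"
    using b u_nonzero[of "Suc i"] zero_smult_vec[OF u_carrier[of "Suc i"]] i by (auto simp: smult_smult_assoc)
  with b show ?thesis by blast
qed

lemma raise_weights: "\<exists>b. \<forall>i<d. b i \<noteq> 0 \<and> Y *\<^sub>v u i = b i \<cdot>\<^sub>v u (Suc i)"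
  using raise_step by metis

lemma coord_lower:
  assumes x: "x \<in> carrier_vec (Suc d)" and j: "j \<le> d"
  shows "coord d u (X *\<^sub>v x) j = (if j < d then coord d u x (Suc j) else 0)"
proof -
  have shift: "coord d u (X *\<^sub>v u i) j = (if i = Suc j then 1 else 0)" if "i \<le> d" for i
  proof (cases "i = 0")
    case True then show ?thesis using lower_first coord_zero[OF basis j] by simp
  next
    case False
    then show ?thesis using lower_step[of i] coord_basis[OF basis _ j, of "i - 1"] that by auto
  qed
  have "coord d u (X *\<^sub>v x) j = coord d u (vsum d (\<lambda>i. coord d u x i \<cdot>\<^sub>v (X *\<^sub>v u i))) j"
    by (subst coord_repr[OF basis x], subst mult_mat_vec_vsum[OF X_carrier u_carrier]) simp_all
  also have "\<dots> = (\<Sum>i\<le>d. coord d u x i * coord d u (X *\<^sub>v u i) j)"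
    by (rule coord_vsum[OF basis _ j]) (use X_carrier in simp)
  also have "\<dots> = (\<Sum>i\<le>d. if i = Suc j then coord d u x (Suc j) else 0)"
    by (rule sum.cong) (auto simp: shift)
  finally show ?thesis by auto
qed

lemma coord_raise:
  assumes b: "\<And>i. i < d \<Longrightarrow> Y *\<^sub>v u i = b i \<cdot>\<^sub>v u (Suc i)"
    and x: "x \<in> carrier_vec (Suc d)" and j: "j \<le> d"
  shows "coord d u (Y *\<^sub>v x) j = (if j = 0 then 0 else b (j - 1) * coord d u x (j - 1))"
proof -
  have shift: "coord d u (Y *\<^sub>v u i) j = (if j = Suc i then b i else 0)" if "i \<le> d" for i
  proof (cases "i < d")
    case True
    then show ?thesis
      using b coord_smult[OF basis u_carrier j] coord_basis[OF basis _ j, of "Suc i"] by auto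
  next
    case False
    then show ?thesis using that j raise_last coord_zero[OF basis j] by auto
  qed
  have "coord d u (Y *\<^sub>v x) j = coord d u (vsum d (\<lambda>i. coord d u x i \<cdot>\<^sub>v (Y *\<^sub>v u i))) j"
    by (subst coord_repr[OF basis x], subst mult_mat_vec_vsum[OF Y_carrier u_carrier]) simp_all
  also have "\<dots> = (\<Sum>i\<le>d. coord d u x i * coord d u (Y *\<^sub>v u i) j)"
    by (rule coord_vsum[OF basis _ j]) (use Y_carrier in simp)
  also have "\<dots> = (\<Sum>i\<le>d. if i = j - 1 \<and> j \<noteq> 0 then coord d u x (j - 1) * b (j - 1) else 0)"
    by (rule sum.cong) (auto simp: shift)
  also have "\<dots> = (if j = 0 then 0 else b (j - 1) * coord d u x (j - 1))"
    using j by auto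
  finally show ?thesis .
qed

lemma coord_raise_first: "x \<in> carrier_vec (Suc d) \<Longrightarrow> coord d u (Y *\<^sub>v x) 0 = 0"
  using raise_weights coord_raise[of _ x 0] by auto

lemma raise_range_iff:
  assumes x: "x \<in> carrier_vec (Suc d)"
  shows "(\<exists>z\<in>carrier_vec (Suc d). x = Y *\<^sub>v z) \<longleftrightarrow> coord d u x 0 = 0"
proof
  assume "\<exists>z\<in>carrier_vec (Suc d). x = Y *\<^sub>v z"
  then show "coord d u x 0 = 0" using coord_raise_first by auto
next
  assume x0: "coord d u x 0 = 0"
  obtain b where b: "\<And>i. i < d \<Longrightarrow> b i \<noteq> 0 \<and> Y *\<^sub>v u i = b i \<cdot>\<^sub>v u (Suc i)"
    using raise_weights by blast
  define c where "c i = (if i < d then coord d u x (Suc i) / b i else 0)" for i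
  define z where "z = vsum d (\<lambda>i. c i \<cdot>\<^sub>v u i)"
  have "Y *\<^sub>v z = x"
  proof (rule vec_eq_coordI[OF basis])
    fix j assume j: "j \<le> d"
    have "coord d u z (j - 1) = c (j - 1)" unfolding z_def by (rule coord_eqI[OF basis refl]) (use j in simp)
    then show "coord d u (Y *\<^sub>v z) j = coord d u x j"
      using coord_raise[of b z j] b j x0 unfolding z_def c_def by auto
  qed (use Y_carrier x in \<open>auto simp: z_def\<close>)
  then show "\<exists>z\<in>carrier_vec (Suc d). x = Y *\<^sub>v z" unfolding z_def by auto
qed

lemma raise_kernel_iff:
  assumes x: "x \<in> carrier_vec (Suc d)"
  shows "Y *\<^sub>v x = 0\<^sub>v (Suc d) \<longleftrightarrow> x \<in> span1 (u d)"
proof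
  assume Yx: "Y *\<^sub>v x = 0\<^sub>v (Suc d)"
  obtain b where b: "\<And>i. i < d \<Longrightarrow> b i \<noteq> 0 \<and> Y *\<^sub>v u i = b i \<cdot>\<^sub>v u (Suc i)"
    using raise_weights by blast
  have "x = coord d u x d \<cdot>\<^sub>v u d"
  proof (rule vec_eq_coordI[OF basis])
    fix j assume j: "j \<le> d"
    show "coord d u x j = coord d u (coord d u x d \<cdot>\<^sub>v u d) j"
    proof (cases "j = d")
      case False
      then have "b j * coord d u x j = 0"
        using coord_raise[of b x "Suc j"] b x j Yx coord_zero[OF basis, of "Suc j"] by auto
      then show ?thesis
        using False j b[of j] coord_smult[OF basis u_carrier j] coord_basis[OF basis _ j] by auto
    qed (use coord_smult[OF basis u_carrier] coord_basis[OF basis] in auto)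
  qed (use x u_carrier in auto)
  then show "x \<in> span1 (u d)" by (metis span1_smult)
next
  assume "x \<in> span1 (u d)"
  then obtain c where "x = c \<cdot>\<^sub>v u d" by (auto simp: in_span1_iff)
  then show "Y *\<^sub>v x = 0\<^sub>v (Suc d)" using mult_mat_vec[OF Y_carrier u_carrier] raise_last by auto
qed

lemma lower_raise_eq_zero:
  assumes z: "z \<in> carrier_vec (Suc d)" and XYz: "X *\<^sub>v (Y *\<^sub>v z) = 0\<^sub>v (Suc d)"
  shows "Y *\<^sub>v z = 0\<^sub>v (Suc d)"
proof (rule vec_eq_coordI[OF basis])
  fix j assume j: "j \<le> d"
  show "coord d u (Y *\<^sub>v z) j = coord d u (0\<^sub>v (Suc d)) j"
  proof (cases j)
    case (Suc i)
    then have "coord d u (Y *\<^sub>v z) j = coord d u (X *\<^sub>v (Y *\<^sub>v z)) i"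
      using coord_lower[of "Y *\<^sub>v z" i] Y_carrier z j by simp
    then show ?thesis using XYz coord_zero[OF basis] j Suc by simp
  qed (use coord_raise_first z coord_zero[OF basis] in simp)
qed (use Y_carrier in auto)

lemma lower_raise_raise_in_range:
  assumes z: "z \<in> carrier_vec (Suc d)"
  shows "\<exists>z'\<in>carrier_vec (Suc d). X *\<^sub>v (Y *\<^sub>v (Y *\<^sub>v z)) = Y *\<^sub>v z'"
proof -
  obtain b where b: "\<And>i. i < d \<Longrightarrow> Y *\<^sub>v u i = b i \<cdot>\<^sub>v u (Suc i)"
    using raise_weights by blast
  have Yz: "Y *\<^sub>v z \<in> carrier_vec (Suc d)" using Y_carrier z by simp
  have "coord d u (X *\<^sub>v (Y *\<^sub>v (Y *\<^sub>v z))) 0 = 0"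
    using coord_lower[of "Y *\<^sub>v (Y *\<^sub>v z)" 0] coord_raise[OF b, of "Y *\<^sub>v z" 1]
      coord_raise_first[OF z] Y_carrier Yz by auto
  then show ?thesis using raise_range_iff[of "X *\<^sub>v (Y *\<^sub>v (Y *\<^sub>v z))"] X_carrier Y_carrier z
    by auto
qed

lemma in_range_raise_twice:
  assumes i: "2 \<le> i" "i \<le> d"
  shows "\<exists>z\<in>carrier_vec (Suc d). u i = Y *\<^sub>v (Y *\<^sub>v z)"
proof -
  obtain b where b: "\<And>i. i < d \<Longrightarrow> b i \<noteq> 0 \<and> Y *\<^sub>v u i = b i \<cdot>\<^sub>v u (Suc i)"
    using raise_weights by blast
  define k where "k = i - 2"
  have k: "i = Suc (Suc k)" "Suc k < d" using i unfolding k_def by auto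
  define c where "c = 1 / (b k * b (Suc k))"
  have "Y *\<^sub>v (Y *\<^sub>v (c \<cdot>\<^sub>v u k)) = (c * b k * b (Suc k)) \<cdot>\<^sub>v u i"
    using b[of k] b[of "Suc k"] k u_carrier mult_mat_vec[OF Y_carrier]
    by (simp add: smult_smult_assoc mult.assoc)
  also have "\<dots> = u i" using b[of k] b[of "Suc k"] k unfolding c_def by simp
  finally show ?thesis using u_carrier[of k] k by (metis less_imp_le_nat smult_carrier_vec Suc_lessD)
qed

end

lemma lowers_nonzero:
  assumes dec: "is_decomp d Vs" and low: "lowers d X Vs" and X: "X \<in> carrier_mat (Suc d) (Suc d)"
    and i: "1 \<le> i" "i \<le> d" and x: "x \<in> Vs i" "x \<noteq> 0\<^sub>v (Suc d)"
  shows "X *\<^sub>v x \<in> Vs (i - 1) \<and> X *\<^sub>v x \<noteq> 0\<^sub>v (Suc d)"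
proof
  have img: "(\<lambda>v. X *\<^sub>v v) ` Vs i = Vs (i - 1)" using low i unfolding lowers_def by blast
  then show "X *\<^sub>v x \<in> Vs (i - 1)" using x(1) by blast
  obtain g where g: "g \<in> carrier_vec (Suc d)" "Vs i = span1 g" using decomp_line[OF dec i(2)] by blast
  have "i - 1 \<le> d" using i by simp
  then obtain g' where g': "g' \<noteq> 0\<^sub>v (Suc d)" "Vs (i - 1) = span1 g'" using decomp_line[OF dec] by blast
  have "g' \<in> span1 (X *\<^sub>v g)" using img g g' self_in_span1[of g'] image_span1[OF X g(1)] by simp
  then have Xg: "X *\<^sub>v g \<noteq> 0\<^sub>v (Suc d)" using g'(1) by (auto simp: in_span1_iff)
  obtain c where c: "x = c \<cdot>\<^sub>v g" using x(1) g(2) by (auto simp: in_span1_iff)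
  then have "c \<noteq> 0" using x(2) g(1) by auto
  then show "X *\<^sub>v x \<noteq> 0\<^sub>v (Suc d)"
    using c Xg mult_mat_vec[OF X g(1)] smult_vec_eq_zero_iff[of "X *\<^sub>v g" "Suc d" c]
      mult_mat_vec_carrier[OF X g(1)] by auto
qed

lemma LR_chain_basis_exists:
  assumes dec: "is_decomp d Vs" and low: "lowers d X Vs" and rai: "raises d Y Vs"
    and X: "X \<in> carrier_mat (Suc d) (Suc d)" and Y: "Y \<in> carrier_mat (Suc d) (Suc d)"
  shows "\<exists>u. LR_chain_basis d X Y u \<and> Vs = lines_of d u"
proof -
  obtain v where v: "v \<noteq> 0\<^sub>v (Suc d)" "Vs d = span1 v" using decomp_line[OF dec] by blast
  define u where "u i = ((\<lambda>x. X *\<^sub>v x) ^^ (d - i)) v" for i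
  have step: "X *\<^sub>v u i = u (i - 1)" if "1 \<le> i" "i \<le> d" for i
    using that Suc_diff_le[of i d] unfolding u_def by (simp add: Suc_diff_le)
  have top_down: "u (d - m) \<in> Vs (d - m) \<and> u (d - m) \<noteq> 0\<^sub>v (Suc d)" if "m \<le> d" for m
    using that
  proof (induction m)
    case 0
    then show ?case using v self_in_span1 unfolding u_def by simp
  next
    case (Suc m)
    then have "u (d - Suc m) = X *\<^sub>v u (d - m)" using step[of "d - m"] by simp
    then show ?case using lowers_nonzero[OF dec low X, of "d - m" "u (d - m)"] Suc by simp
  qed
  have lines: "Vs i = span1 (u i)" and nz: "u i \<noteq> 0\<^sub>v (Suc d)"
    and car: "u i \<in> carrier_vec (Suc d)" if i: "i \<le> d" for i
  proof -
    have ui: "u i \<in> Vs i" "u i \<noteq> 0\<^sub>v (Suc d)" using top_down[of "d - i"] i by auto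
    obtain g where g: "g \<in> carrier_vec (Suc d)" "Vs i = span1 g" using decomp_line[OF dec i] by blast
    show "Vs i = span1 (u i)" using span1_eq[OF g(1)] ui g(2) by simp
    show "u i \<noteq> 0\<^sub>v (Suc d)" by (rule ui(2))
    show "u i \<in> carrier_vec (Suc d)" using ui(1) g by (auto simp: in_span1_iff)
  qed
  have Vs: "Vs = lines_of d u" by (rule decomp_eq_lines_of_basis[OF dec lines])
  have "LR_chain_basis d X Y u"
    by unfold_locales (use X Y low rai step is_basis_of_decomp[OF dec lines car nz] Vs in auto)
  with Vs show ?thesis by blast
qed

context LR_chain_basis
begin

lemma smult:
  assumes a: "a \<noteq> 0"
  shows "LR_chain_basis d X Y (\<lambda>i. a \<cdot>\<^sub>v u i)"
proof -
  have lines: "lines_of d (\<lambda>i. a \<cdot>\<^sub>v u i) = lines_of d u" by (rule lines_of_smult[OF basis a])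
  have "lines_of d u i = span1 (a \<cdot>\<^sub>v u i)" if "i \<le> d" for i
    using fun_cong[OF lines, of i] that by (simp add: lines_of_def)
  then have "is_basis d (\<lambda>i. a \<cdot>\<^sub>v u i)"
    using is_basis_of_decomp[OF is_decomp_lines_of[OF basis]] u_carrier u_nonzero a
    by (simp add: smult_vec_eq_zero_iff)
  then show ?thesis
    using X_carrier Y_carrier lowers raises lower_step u_carrier
    by unfold_locales (simp_all add: lines mult_mat_vec)
qed

lemma chain_basis_unique:
  assumes "LR_chain_basis d X Y w"
  shows "\<exists>c. c \<noteq> 0 \<and> (\<forall>i\<le>d. w i = c \<cdot>\<^sub>v u i)"
proof -
  interpret w: LR_chain_basis d X Y w by (rule assms)
  have "w d \<in> span1 (u d)" using raise_kernel_iff w.raise_last w.u_carrier by simp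
  then obtain c where c: "w d = c \<cdot>\<^sub>v u d" by (auto simp: in_span1_iff)
  have "c \<noteq> 0" using c w.u_nonzero[of d] u_carrier[of d] by auto
  have top_down: "w (d - m) = c \<cdot>\<^sub>v u (d - m)" if "m \<le> d" for m
    using that
  proof (induction m)
    case (Suc m)
    have "w (d - Suc m) = X *\<^sub>v w (d - m)" using w.lower_step[of "d - m"] Suc.prems by simp
    also have "\<dots> = c \<cdot>\<^sub>v (X *\<^sub>v u (d - m))" using Suc mult_mat_vec[OF X_carrier u_carrier] by simp
    also have "\<dots> = c \<cdot>\<^sub>v u (d - Suc m)" using lower_step[of "d - m"] Suc.prems by simp
    finally show ?case .
  qed (use c in simp)
  have "w i = c \<cdot>\<^sub>v u i" if "i \<le> d" for i using top_down[of "d - i"] that by simp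
  with \<open>c \<noteq> 0\<close> show ?thesis by blast
qed

end

lemma LR_decomp_eqI:
  assumes dec: "is_decomp d Vs" and low: "lowers d X Vs" and rai: "raises d Y Vs"
    and X: "X \<in> carrier_mat (Suc d) (Suc d)" and Y: "Y \<in> carrier_mat (Suc d) (Suc d)"
  shows "LR_decomp d X Y = Vs"
  unfolding LR_decomp_def
proof (rule the_equality)
  fix Ws assume "is_decomp d Ws \<and> lowers d X Ws \<and> raises d Y Ws"
  then obtain w where w: "LR_chain_basis d X Y w" "Ws = lines_of d w"
    using LR_chain_basis_exists[of d Ws X Y] X Y by blast
  obtain u where u: "LR_chain_basis d X Y u" "Vs = lines_of d u"
    using LR_chain_basis_exists[OF dec low rai X Y] by blast
  obtain c where "c \<noteq> 0" and wc: "\<forall>i\<le>d. w i = c \<cdot>\<^sub>v u i"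
    using LR_chain_basis.chain_basis_unique[OF u(1) w(1)] by blast
  then have "lines_of d w = lines_of d (\<lambda>i. c \<cdot>\<^sub>v u i)" unfolding lines_of_def by (intro ext) simp
  then show "Ws = Vs" using w u lines_of_smult[OF LR_chain_basis.basis[OF u(1)] \<open>c \<noteq> 0\<close>] by simp
qed (use dec low rai in blast)

lemma LR_pair_chain_basis: "LR_pair d X Y \<Longrightarrow> \<exists>u. LR_chain_basis d X Y u"
  unfolding LR_pair_def using LR_chain_basis_exists by blast

context LR_chain_basis
begin

lemma LR_decomp_eq: "LR_decomp d X Y = lines_of d u"
  by (rule LR_decomp_eqI[OF is_decomp_lines_of[OF basis] lowers raises X_carrier Y_carrier])

lemma LR_basis_iff: "LR_basis d X Y w \<longleftrightarrow> LR_chain_basis d X Y w"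
proof
  assume w: "LR_basis d X Y w"
  then have B: "is_basis d w" unfolding LR_basis_def by blast
  have span: "span1 (w i) = span1 (u i)" if "i \<le> d" for i
  proof -
    have "w i \<in> lines_of d u i" using w that unfolding LR_basis_def LR_decomp_eq by blast
    then show ?thesis
      using span1_eq[OF u_carrier[OF that] _ basis_nonzero[OF B that]] that unfolding lines_of_def by simp
  qed
  then have "lines_of d w = lines_of d u" unfolding lines_of_def by (intro ext) (simp add: span)
  then show "LR_chain_basis d X Y w"
    using w X_carrier Y_carrier lowers raises unfolding LR_basis_def by unfold_locales auto
next
  assume "LR_chain_basis d X Y w"
  then interpret w: LR_chain_basis d X Y w .
  show "LR_basis d X Y w"
    unfolding LR_basis_def w.LR_decomp_eq lines_of_def
    using w.basis w.lower_step self_in_span1 by auto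
qed

lemma reverse_lines_of:
  "i \<le> d \<Longrightarrow> lines_of d (\<lambda>i. u (d - i)) i = lines_of d u (d - i)"
  unfolding lines_of_def by simp

lemma reverse_pair:
  shows "LR_decomp d Y X = lines_of d (\<lambda>i. u (d - i))"
    and "\<exists>w. LR_chain_basis d Y X w"
proof -
  let ?V = "lines_of d (\<lambda>i. u (d - i))"
  have dec: "is_decomp d ?V" by (rule is_decomp_lines_of[OF basis_reverse[OF basis]])
  have low: "lowers d Y ?V"
    using raises unfolding lowers_def raises_def
    by (auto simp: reverse_lines_of Suc_diff_le simp del: lines_of_def)
  have rai: "raises d X ?V"
    using lowers unfolding lowers_def raises_def
    by (auto simp: reverse_lines_of simp del: lines_of_def)
  show "LR_decomp d Y X = ?V" by (rule LR_decomp_eqI[OF dec low rai Y_carrier X_carrier])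
  show "\<exists>w. LR_chain_basis d Y X w"
    using LR_chain_basis_exists[OF dec low rai Y_carrier X_carrier] by blast
qed

end

section \<open>Transition matrices and their parameters\<close>

definition transition_mat :: "nat \<Rightarrow> (nat \<Rightarrow> 'a::field vec) \<Rightarrow> (nat \<Rightarrow> 'a vec) \<Rightarrow> 'a mat" where
  "transition_mat d u w = mat (Suc d) (Suc d) (\<lambda>(i, k). coord d u (w k) i)"

lemma transition_mat_carrier: "transition_mat d u w \<in> carrier_mat (Suc d) (Suc d)"
  unfolding transition_mat_def by simp

lemma is_transition_transition_mat:
  assumes B: "is_basis d u" and w: "\<And>k. k \<le> d \<Longrightarrow> w k \<in> carrier_vec (Suc d)"
  shows "is_transition d u w (transition_mat d u w)"
  unfolding is_transition_def transition_mat_def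
proof (intro conjI allI impI)
  fix k assume k: "k \<le> d"
  have "w k = vsum d (\<lambda>i. coord d u (w k) i \<cdot>\<^sub>v u i)" by (rule coord_repr[OF B w[OF k]])
  also have "\<dots> = vsum d (\<lambda>i. mat (Suc d) (Suc d) (\<lambda>(i, k). coord d u (w k) i) $$ (i, k) \<cdot>\<^sub>v u i)"
    by (rule vsum_cong) (use k in simp)
  finally show "w k = vsum d (\<lambda>i. mat (Suc d) (Suc d) (\<lambda>(i, k). coord d u (w k) i) $$ (i, k) \<cdot>\<^sub>v u i)" .
qed simp

lemma transition_eq_transition_mat:
  assumes B: "is_basis d u" and T: "is_transition d u w T"
  shows "T = transition_mat d u w"
proof (rule eq_matI)
  fix i k assume "i < dim_row (transition_mat d u w)" "k < dim_col (transition_mat d u w)"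
  then have ik: "i \<le> d" "k \<le> d" by (auto simp: transition_mat_def)
  have "w k = vsum d (\<lambda>i. T $$ (i, k) \<cdot>\<^sub>v u i)" using T ik unfolding is_transition_def by blast
  from coord_eqI[OF B this ik(1)] show "T $$ (i, k) = transition_mat d u w $$ (i, k)"
    using ik by (simp add: transition_mat_def)
qed (use T in \<open>auto simp: is_transition_def transition_mat_def\<close>)

lemma transition_mat_mult:
  assumes Bu: "is_basis d u" and Bw: "is_basis d w"
  shows "transition_mat d u w * transition_mat d w u = 1\<^sub>m (Suc d)"
proof (rule eq_matI)
  fix i j assume "i < dim_row (1\<^sub>m (Suc d))" "j < dim_col (1\<^sub>m (Suc d))"
  then have i: "i \<le> d" and j: "j \<le> d" by auto
  have "u j = vsum d (\<lambda>k. coord d w (u j) k \<cdot>\<^sub>v w k)" by (rule coord_repr[OF Bw basis_carrier[OF Bu j]])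
  moreover have "coord d u (vsum d (\<lambda>k. coord d w (u j) k \<cdot>\<^sub>v w k)) i =
      (\<Sum>k\<le>d. coord d w (u j) k * coord d u (w k) i)"
    by (rule coord_vsum[OF Bu _ i]) (rule basis_carrier[OF Bw])
  ultimately have "(\<Sum>k\<le>d. coord d w (u j) k * coord d u (w k) i) = coord d u (u j) i" by simp
  then show "(transition_mat d u w * transition_mat d w u) $$ (i, j) = 1\<^sub>m (Suc d) $$ (i, j)"
    using i j coord_basis[OF Bu j i]
    by (simp add: transition_mat_def scalar_prod_def atLeast0LessThan lessThan_Suc_atMost mult.commute
        del: sum.lessThan_Suc)
qed (simp_all add: transition_mat_def)

lemma transition_mat_right_inverse:
  assumes Bu: "is_basis d u" and Bw: "is_basis d w" and T': "T' \<in> carrier_mat (Suc d) (Suc d)"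
    and inv: "inverts_mat (transition_mat d u w) T'"
  shows "T' = transition_mat d w u"
proof -
  let ?T = "transition_mat d u w" and ?T' = "transition_mat d w u"
  have TT': "?T * T' = 1\<^sub>m (Suc d)" using inv unfolding inverts_mat_def by (simp add: transition_mat_def)
  have "?T' = ?T' * (?T * T')" unfolding TT' by (rule right_mult_one_mat[OF transition_mat_carrier, symmetric])
  also have "\<dots> = (?T' * ?T) * T'"
    by (rule assoc_mult_mat[OF transition_mat_carrier transition_mat_carrier T', symmetric])
  also have "\<dots> = T'" using transition_mat_mult[OF Bw Bu] T' by (simp add: left_mult_one_mat)
  finally show ?thesis by simp
qed

context LR_chain_basis
begin

lemma coord_chain_shift:
  assumes w: "LR_chain_basis d X Z w" and i: "i \<le> d" and k: "k \<le> d"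
  shows "coord d u (w k) i = (if i \<le> k then coord d u (w (k - i)) 0 else 0)"
  using i k
proof (induction i arbitrary: k)
  case (Suc i)
  interpret w: LR_chain_basis d X Z w by (rule w)
  have "coord d u (w k) (Suc i) = coord d u (X *\<^sub>v w k) i"
    using coord_lower[OF w.u_carrier, of k i] Suc.prems by simp
  also have "\<dots> = (if Suc i \<le> k then coord d u (w (k - Suc i)) 0 else 0)"
  proof (cases k)
    case 0
    then show ?thesis using w.lower_first coord_zero[OF basis] Suc.prems by simp
  next
    case (Suc k')
    then show ?thesis using w.lower_step[of k] Suc.IH[of k'] Suc.prems by simp
  qed
  finally show ?case .
qed simp

lemma transition_mat_toeplitz:
  assumes "LR_chain_basis d X Z w"
  shows "toeplitz d (transition_mat d u w) (\<lambda>j. coord d u (w j) 0)"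
  unfolding toeplitz_def using coord_chain_shift[OF assms] transition_mat_carrier
  by (auto simp: transition_mat_def)

lemma coord_first_nonzero:
  assumes "LR_chain_basis d X Z w"
  shows "coord d u (w 0) 0 \<noteq> 0"
proof
  interpret w: LR_chain_basis d X Z w by (rule assms)
  assume w0: "coord d u (w 0) 0 = 0"
  have "coord d u (w 0) j = coord d u (0\<^sub>v (Suc d)) j" if "j \<le> d" for j
    using coord_chain_shift[OF assms that le0] coord_zero[OF basis that] w0 by (cases j) simp_all
  then have "w 0 = 0\<^sub>v (Suc d)" by (intro vec_eq_coordI[OF basis w.u_carrier]) simp_all
  then show False using w.u_nonzero by simp
qed

lemma coord_smult_basis:
  assumes a: "a \<noteq> 0" and x: "x \<in> carrier_vec (Suc d)" and j: "j \<le> d"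
  shows "coord d (\<lambda>i. a \<cdot>\<^sub>v u i) x j = coord d u x j / a"
proof -
  interpret au: LR_chain_basis d X Y "\<lambda>i. a \<cdot>\<^sub>v u i" by (rule smult[OF a])
  have "x = vsum d (\<lambda>i. coord d u x i \<cdot>\<^sub>v u i)" by (rule coord_repr[OF basis x])
  also have "\<dots> = vsum d (\<lambda>i. (coord d u x i / a) \<cdot>\<^sub>v (a \<cdot>\<^sub>v u i))"
    by (rule vsum_cong) (use a in \<open>simp add: smult_smult_assoc\<close>)
  finally show ?thesis by (rule coord_eqI[OF au.basis _ j])
qed

end

definition compatible_transition ::
  "nat \<Rightarrow> 'a::field mat \<Rightarrow> 'a mat \<Rightarrow> 'a mat \<Rightarrow> (nat \<Rightarrow> 'a vec) \<Rightarrow> (nat \<Rightarrow> 'a vec) \<Rightarrow> 'a mat \<Rightarrow> (nat \<Rightarrow> 'a) \<Rightarrow> bool"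
  where "compatible_transition d X Y Z u w T g \<longleftrightarrow>
    LR_basis d X Y u \<and> LR_basis d X Z w \<and> is_transition d u w T \<and> toeplitz d T g \<and> g 0 = 1"

lemma trans_param_altdef:
  "trans_param d X Y Z i = (THE x. \<exists>u w T g. compatible_transition d X Y Z u w T g \<and> g i = x)"
  unfolding trans_param_def compatible_transition_def by (simp add: conj_assoc)

lemma trans_inv_param_altdef:
  "trans_inv_param d X Y Z i = (THE x. \<exists>u w T g T' h. compatible_transition d X Y Z u w T g \<and>
     T' \<in> carrier_mat (Suc d) (Suc d) \<and> inverts_mat T T' \<and> toeplitz d T' h \<and> h i = x)"
  unfolding trans_inv_param_def compatible_transition_def by (simp add: conj_assoc)

context LR_chain_basis
begin

lemma normalized_chain_basis:
  assumes "LR_chain_basis d X Z w"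
  shows "\<exists>w'. LR_chain_basis d X Z w' \<and> coord d u (w' 0) 0 = 1"
proof -
  interpret w: LR_chain_basis d X Z w by (rule assms)
  let ?a = "1 / coord d u (w 0) 0"
  have "?a \<noteq> 0" using coord_first_nonzero[OF assms] by simp
  show ?thesis
  proof (intro exI conjI)
    show "LR_chain_basis d X Z (\<lambda>i. ?a \<cdot>\<^sub>v w i)" by (rule w.smult[OF \<open>?a \<noteq> 0\<close>])
    show "coord d u (?a \<cdot>\<^sub>v w 0) 0 = 1"
      using coord_smult[OF basis w.u_carrier, of 0 0] coord_first_nonzero[OF assms] by simp
  qed
qed

lemma compatible_transition_eq:
  assumes w: "LR_chain_basis d X Z w" and w0: "coord d u (w 0) 0 = 1"
    and c: "compatible_transition d X Y Z u' w' T g"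
  shows "T = transition_mat d u w"
proof -
  interpret w: LR_chain_basis d X Z w by (rule w)
  have u': "LR_chain_basis d X Y u'" and w': "LR_chain_basis d X Z w'"
    using c LR_basis_iff w.LR_basis_iff unfolding compatible_transition_def by auto
  obtain a where a: "a \<noteq> 0" "\<forall>i\<le>d. u' i = a \<cdot>\<^sub>v u i" using chain_basis_unique[OF u'] by blast
  obtain b where b: "b \<noteq> 0" "\<forall>i\<le>d. w' i = b \<cdot>\<^sub>v w i" using w.chain_basis_unique[OF w'] by blast
  have T: "T = transition_mat d u' w'"
    using c transition_eq_transition_mat[OF LR_chain_basis.basis[OF u']] unfolding compatible_transition_def by blast
  have entry: "T $$ (i, k) = b / a * coord d u (w k) i" if "i \<le> d" "k \<le> d" for i k
  proof -
    have "T $$ (i, k) = coord d (\<lambda>i. a \<cdot>\<^sub>v u i) (b \<cdot>\<^sub>v w k) i"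
      unfolding T transition_mat_def using that coord_cong[of d u' "\<lambda>i. a \<cdot>\<^sub>v u i"] a(2) b(2) by simp
    also have "\<dots> = b / a * coord d u (w k) i"
      using coord_smult_basis[OF a(1) _ that(1), of "b \<cdot>\<^sub>v w k"] coord_smult[OF basis w.u_carrier that(1)]
        w.u_carrier that(2) by simp
    finally show ?thesis .
  qed
  have "T $$ (0, 0) = 1" using c unfolding compatible_transition_def toeplitz_def by auto
  then have "b / a = 1" using entry[of 0 0] w0 by simp
  then show ?thesis
    using entry T by (intro eq_matI) (auto simp: transition_mat_def)
qed

lemma compatible_transition_mat:
  assumes w: "LR_chain_basis d X Z w" and w0: "coord d u (w 0) 0 = 1"
  shows "compatible_transition d X Y Z u w (transition_mat d u w) (\<lambda>j. coord d u (w j) 0)"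
proof -
  interpret w: LR_chain_basis d X Z w by (rule w)
  show ?thesis
    unfolding compatible_transition_def
    using LR_basis_iff w.LR_basis_iff w is_transition_transition_mat[OF basis w.u_carrier]
      transition_mat_toeplitz[OF w] w0 by (auto intro: LR_chain_basis_axioms)
qed

lemma trans_param_eq:
  assumes w: "LR_chain_basis d X Z w" and w0: "coord d u (w 0) 0 = 1" and i: "i \<le> d"
  shows "trans_param d X Y Z i = coord d u (w i) 0"
  unfolding trans_param_altdef
proof (rule the_equality)
  show "\<exists>u' w' T g. compatible_transition d X Y Z u' w' T g \<and> g i = coord d u (w i) 0"
    using compatible_transition_mat[OF w w0] by blast
next
  fix x assume "\<exists>u' w' T g. compatible_transition d X Y Z u' w' T g \<and> g i = x"
  then obtain u' w' T g where c: "compatible_transition d X Y Z u' w' T g" "g i = x" by blast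
  then have "T $$ (0, i) = x" using i unfolding compatible_transition_def toeplitz_def by auto
  then show "x = coord d u (w i) 0"
    using compatible_transition_eq[OF w w0 c(1)] i by (simp add: transition_mat_def)
qed

lemma trans_inv_param_eq:
  assumes w: "LR_chain_basis d X Z w" and w0: "coord d u (w 0) 0 = 1" and i: "i \<le> d"
  shows "trans_inv_param d X Y Z i = coord d w (u i) 0"
  unfolding trans_inv_param_altdef
proof (rule the_equality)
  have "inverts_mat (transition_mat d u w) (transition_mat d w u)"
    unfolding inverts_mat_def using transition_mat_mult[OF basis LR_chain_basis.basis[OF w]]
    by (simp add: transition_mat_def)
  then show "\<exists>u' w' T g T' h. compatible_transition d X Y Z u' w' T g \<and> T' \<in> carrier_mat (Suc d) (Suc d) \<and>
      inverts_mat T T' \<and> toeplitz d T' h \<and> h i = coord d w (u i) 0"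
    using compatible_transition_mat[OF w w0] transition_mat_carrier
      LR_chain_basis.transition_mat_toeplitz[OF w LR_chain_basis_axioms] by blast
next
  fix x assume "\<exists>u' w' T g T' h. compatible_transition d X Y Z u' w' T g \<and> T' \<in> carrier_mat (Suc d) (Suc d) \<and>
      inverts_mat T T' \<and> toeplitz d T' h \<and> h i = x"
  then obtain u' w' T g T' h where c: "compatible_transition d X Y Z u' w' T g"
    and T': "T' \<in> carrier_mat (Suc d) (Suc d)" "inverts_mat T T'" "toeplitz d T' h" "h i = x"
    by blast
  have "T' = transition_mat d w u"
    using transition_mat_right_inverse[OF basis LR_chain_basis.basis[OF w] T'(1)] T'(2)
      compatible_transition_eq[OF w w0 c] by simp
  then show "x = coord d w (u i) 0"
    using T' i unfolding toeplitz_def by (auto simp: transition_mat_def)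
qed

end

section \<open>Parity of the parameters\<close>

lemma parity_from_recurrence:
  fixes g :: "nat \<Rightarrow> 'a::field"
  assumes g0: "g 0 \<noteq> 0" and gd: "g d \<noteq> 0"
    and rec: "\<And>k. k < d \<Longrightarrow> g (Suc k) = 0 \<longleftrightarrow> k = 0 \<or> g (k - 1) = 0 \<or> p = 0"
  shows "even d \<and> (\<forall>i\<le>d. (odd i \<longrightarrow> g i = 0) \<and> (even i \<longrightarrow> g i \<noteq> 0))"
proof -
  have odd_zero: "g (2 * m + 1) = 0" if "2 * m + 1 \<le> d" for m
    using that by (induction m) (use rec in auto)
  have "even d"
    using odd_zero gd by (metis oddE order_refl)
  have "p \<noteq> 0" if "2 \<le> d"
    using rec[of "d - 1"] gd that by (simp add: Suc_diff_1)
  then have even_nonzero: "g (2 * m) \<noteq> 0" if "2 * m \<le> d" for m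
    using that by (induction m) (use g0 rec in auto)
  show ?thesis
    using \<open>even d\<close> odd_zero even_nonzero by (auto elim!: oddE evenE)
qed

context LR_chain_basis
begin

text \<open>Here \<open>u\<^sub>0\<close> contributes nothing by the trace hypothesis, and each \<open>u\<^sub>i\<close> with \<open>i \<ge> 2\<close>
  lies in \<open>Y(YV)\<close>, which \<open>M\<close> maps into \<open>YV\<close>.\<close>

lemma coord_first_mult_partner:
  assumes v: "LR_chain_basis d M Y v" and trace: "coord d u (M *\<^sub>v u 0) 0 = 0"
    and x: "x \<in> carrier_vec (Suc d)" and d: "1 \<le> d"
  shows "coord d u (M *\<^sub>v x) 0 = coord d u x 1 * coord d u (M *\<^sub>v u 1) 0"
proof -
  interpret v: LR_chain_basis d M Y v by (rule v)
  define p where "p = coord d u (M *\<^sub>v u 1) 0"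
  have Mu: "coord d u (M *\<^sub>v u i) 0 = (if i = 1 then p else 0)" if "i \<le> d" for i
  proof -
    have "coord d u (M *\<^sub>v u i) 0 = 0" if i: "2 \<le> i" "i \<le> d"
    proof -
      obtain z where z: "z \<in> carrier_vec (Suc d)" "u i = Y *\<^sub>v (Y *\<^sub>v z)"
        using in_range_raise_twice[OF i] by blast
      obtain z' where "z' \<in> carrier_vec (Suc d)" "M *\<^sub>v (Y *\<^sub>v (Y *\<^sub>v z)) = Y *\<^sub>v z'"
        using v.lower_raise_raise_in_range[OF z(1)] by blast
      then show ?thesis using z coord_raise_first by simp
    qed
    then show ?thesis using trace that unfolding p_def by (cases "i \<le> 1") (auto simp: le_Suc_eq)
  qed
  have "coord d u (M *\<^sub>v x) 0 = coord d u (vsum d (\<lambda>i. coord d u x i \<cdot>\<^sub>v (M *\<^sub>v u i))) 0"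
    by (subst coord_repr[OF basis x], subst mult_mat_vec_vsum[OF v.X_carrier u_carrier]) simp_all
  also have "\<dots> = (\<Sum>i\<le>d. coord d u x i * coord d u (M *\<^sub>v u i) 0)"
    by (rule coord_vsum[OF basis _ le0]) simp
  also have "\<dots> = (\<Sum>i\<le>d. if i = 1 then coord d u x 1 * p else 0)"
    by (rule sum.cong) (auto simp: Mu)
  finally show ?thesis using d unfolding p_def by simp
qed

lemma transition_parity:
  assumes w: "LR_chain_basis d X M w" and v: "LR_chain_basis d M Y v"
    and trace: "coord d u (M *\<^sub>v u 0) 0 = 0"
  shows "even d \<and> (\<forall>i\<le>d. (odd i \<longrightarrow> coord d u (w i) 0 = 0) \<and> (even i \<longrightarrow> coord d u (w i) 0 \<noteq> 0))"
proof (rule parity_from_recurrence)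
  interpret w: LR_chain_basis d X M w by (rule w)
  interpret v: LR_chain_basis d M Y v by (rule v)
  show "coord d u (w 0) 0 \<noteq> 0" by (rule coord_first_nonzero[OF w])
  show "coord d u (w d) 0 \<noteq> 0"
  proof
    assume "coord d u (w d) 0 = 0"
    then obtain z where z: "z \<in> carrier_vec (Suc d)" "w d = Y *\<^sub>v z"
      using raise_range_iff[OF w.u_carrier] by blast
    then have "Y *\<^sub>v z = 0\<^sub>v (Suc d)" using v.lower_raise_eq_zero w.raise_last by simp
    then show False using z w.u_nonzero by simp
  qed
  fix k assume k: "k < d"
  obtain a where a: "a \<noteq> 0" "M *\<^sub>v w k = a \<cdot>\<^sub>v w (Suc k)" using w.raise_step[OF k] by blast
  have "a * coord d u (w (Suc k)) 0 = coord d u (M *\<^sub>v w k) 0"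
    using a coord_smult[OF basis w.u_carrier] k by simp
  also have "\<dots> = coord d u (w k) 1 * coord d u (M *\<^sub>v u 1) 0"
    using coord_first_mult_partner[OF v trace w.u_carrier] k by simp
  also have "\<dots> = (if k = 0 then 0 else coord d u (w (k - 1)) 0 * coord d u (M *\<^sub>v u 1) 0)"
    using coord_chain_shift[OF w, of 1 k] k by simp
  finally show "coord d u (w (Suc k)) 0 = 0 \<longleftrightarrow>
      k = 0 \<or> coord d u (w (k - 1)) 0 = 0 \<or> coord d u (M *\<^sub>v u 1) 0 = 0"
    using a(1) by (auto split: if_splits)
qed

end

text \<open>The \<open>(B,C)\<close>-decomposition is the \<open>(C,B)\<close>-decomposition in reverse order, so
  \<open>E'\<^sub>d\<close> projects onto the line of \<open>u\<^sub>0\<close>.\<close>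

lemma bipartite_trans_param_parity:
  fixes A B C :: "'a::field mat"
  assumes bip: "bipartite_LR_triple d A B C"
  shows "even d \<and> (\<forall>i\<le>d. (odd i \<longrightarrow> trans_param d C B A i = 0 \<and> trans_inv_param d C B A i = 0) \<and>
                          (even i \<longrightarrow> trans_param d C B A i \<noteq> 0 \<and> trans_inv_param d C B A i \<noteq> 0))"
proof -
  have pairs: "LR_pair d A B" "LR_pair d B C" "LR_pair d C A"
    and trace_A: "mtrace (A * proj_mat d (LR_decomp d B C) d) = 0"
    and trace_B: "mtrace (B * proj_mat d (LR_decomp d C A) 0) = 0"
    using bip unfolding bipartite_LR_triple_def LR_triple_def by auto
  obtain v where v: "LR_chain_basis d A B v" using LR_pair_chain_basis[OF pairs(1)] by blast
  obtain y where y: "LR_chain_basis d B C y" using LR_pair_chain_basis[OF pairs(2)] by blast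
  obtain w0 where w0: "LR_chain_basis d C A w0" using LR_pair_chain_basis[OF pairs(3)] by blast
  obtain v' where v': "LR_chain_basis d B A v'" using LR_chain_basis.reverse_pair(2)[OF v] by blast
  obtain u where u: "LR_chain_basis d C B u" using LR_chain_basis.reverse_pair(2)[OF y] by blast
  interpret u: LR_chain_basis d C B u by (rule u)
  obtain w where w: "LR_chain_basis d C A w" and w_first: "coord d u (w 0) 0 = 1"
    using u.normalized_chain_basis[OF w0] by blast
  interpret w: LR_chain_basis d C A w by (rule w)
  have "LR_decomp d B C = lines_of d (\<lambda>i. u (d - i))" by (rule u.reverse_pair(1))
  then have "coord d u (A *\<^sub>v u 0) 0 = 0"
    using trace_A trace_mult_proj_mat[OF basis_reverse[OF u.basis] LR_chain_basis.X_carrier[OF v], of d]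
      coord_reverse[OF u.basis, of "A *\<^sub>v u 0" d] by simp
  then have alpha: "even d \<and> (\<forall>i\<le>d. (odd i \<longrightarrow> coord d u (w i) 0 = 0) \<and> (even i \<longrightarrow> coord d u (w i) 0 \<noteq> 0))"
    by (rule u.transition_parity[OF w v])
  have "coord d w (B *\<^sub>v w 0) 0 = 0"
    using trace_B trace_mult_proj_mat[OF w.basis LR_chain_basis.Y_carrier[OF v] le0] w.LR_decomp_eq by simp
  then have beta: "\<forall>i\<le>d. (odd i \<longrightarrow> coord d w (u i) 0 = 0) \<and> (even i \<longrightarrow> coord d w (u i) 0 \<noteq> 0)"
    using w.transition_parity[OF u v'] by blast
  show ?thesis
    using alpha beta u.trans_param_eq[OF w w_first] u.trans_inv_param_eq[OF w w_first] by simp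
qed

lemma bipartite_LR_triple_rotate: "bipartite_LR_triple d A B C \<Longrightarrow> bipartite_LR_triple d B C A"
  unfolding bipartite_LR_triple_def LR_triple_def by blast

theorem lemma16p6:
  fixes A B C :: "'a::field mat" and d :: nat
  assumes "bipartite_LR_triple d A B C"
  shows "even d \<and>
    (\<forall>i\<le>d. (odd i \<longrightarrow> alpha d A B C i = 0 \<and> alpha' d A B C i = 0 \<and> alpha'' d A B C i = 0 \<and>
                         beta d A B C i = 0 \<and> beta' d A B C i = 0 \<and> beta'' d A B C i = 0) \<and>
            (even i \<longrightarrow> alpha d A B C i \<noteq> 0 \<and> alpha' d A B C i \<noteq> 0 \<and> alpha'' d A B C i \<noteq> 0 \<and>
                         beta d A B C i \<noteq> 0 \<and> beta' d A B C i \<noteq> 0 \<and> beta'' d A B C i \<noteq> 0))"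
proof -
  have BCA: "bipartite_LR_triple d B C A" by (rule bipartite_LR_triple_rotate[OF assms])
  have CAB: "bipartite_LR_triple d C A B" by (rule bipartite_LR_triple_rotate[OF BCA])
  show ?thesis
    using bipartite_trans_param_parity[OF assms] bipartite_trans_param_parity[OF BCA]
      bipartite_trans_param_parity[OF CAB]
    unfolding alpha_def alpha'_def alpha''_def beta_def beta'_def beta''_def by blast
qed

end
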